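(* Let $A$ be a graded $R$-algebra and $M$ an $A$-bimodule such that $M$ is free as a left $A$-module on a generating graded $R$-module $X$, i.e. $M\cong A\otimes X$ as left $A$-modules, and the right $A$-action on $M$ satisfies $(a\otimes x)\cdot b-(-1)^{mn}ab\otimes x\in A\otimes X_{<m}$ for all $a\in A$, $x\in X_m$, $b\in A_n$ and $m,n\ge0$. Then $M$ is free as a right $A$-module.
   Context: $R$ is a commutative ring; gradings are nonnegative; $X_{<m}=\bigoplus_{j<m}X_j$; signs follow the Koszul convention. *)

theory Defs
  imports Main
begin

definition graded_dsum :: "(nat \<Rightarrow> 'a::ab_group_add set) \<Rightarrow> bool" where
  "graded_dsum G \<longleftrightarrow>
     (\<forall>n. 0 \<in> G n \<and> (\<forall>x\<in>G n. \<forall>y\<in>G n. x + y \<in> G n \<and> - x \<in> G n)) \<and>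
     (\<forall>v. \<exists>!f. (\<forall>n. f n \<in> G n) \<and> finite {n. f n \<noteq> 0} \<and> v = sum f {n. f n \<noteq> 0})"

text \<open>A graded R-algebra: a ring A with a central ring homomorphism alg : R \<rightarrow> A
  (so r \<cdot> a = alg r * a), graded by R-submodules GA n with 1 in degree 0 and
  GA m * GA n \<subseteq> GA (m+n).\<close>
definition graded_R_algebra :: "('r::comm_ring_1 \<Rightarrow> 'a::ring_1) \<Rightarrow> (nat \<Rightarrow> 'a set) \<Rightarrow> bool" where
  "graded_R_algebra alg GA \<longleftrightarrow>
     alg 1 = 1 \<and> (\<forall>r s. alg (r + s) = alg r + alg s) \<and> (\<forall>r s. alg (r * s) = alg r * alg s) \<and>
     (\<forall>r a. alg r * a = a * alg r) \<and>
     graded_dsum GA \<and> (\<forall>n r a. a \<in> GA n \<longrightarrow> alg r * a \<in> GA n) \<and>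
     1 \<in> GA 0 \<and> (\<forall>m n a b. a \<in> GA m \<longrightarrow> b \<in> GA n \<longrightarrow> a * b \<in> GA (m + n))"

definition graded_bimodule ::
  "('r::comm_ring_1 \<Rightarrow> 'a::ring_1) \<Rightarrow> (nat \<Rightarrow> 'a set) \<Rightarrow> ('a \<Rightarrow> 'm::ab_group_add \<Rightarrow> 'm)
     \<Rightarrow> ('m \<Rightarrow> 'a \<Rightarrow> 'm) \<Rightarrow> (nat \<Rightarrow> 'm set) \<Rightarrow> bool" where
  "graded_bimodule alg GA lM rM GM \<longleftrightarrow>
     (\<forall>a m m'. lM a (m + m') = lM a m + lM a m') \<and>
     (\<forall>a a' m. lM (a + a') m = lM a m + lM a' m) \<and>
     (\<forall>a a' m. lM (a * a') m = lM a (lM a' m)) \<and>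
     (\<forall>m. lM 1 m = m) \<and>
     (\<forall>m m' b. rM (m + m') b = rM m b + rM m' b) \<and>
     (\<forall>m b b'. rM m (b + b') = rM m b + rM m b') \<and>
     (\<forall>m b b'. rM m (b * b') = rM (rM m b) b') \<and>
     (\<forall>m. rM m 1 = m) \<and>
     (\<forall>a m b. rM (lM a m) b = lM a (rM m b)) \<and>
     (\<forall>r m. lM (alg r) m = rM m (alg r)) \<and>
     graded_dsum GM \<and>
     (\<forall>i k a m. a \<in> GA i \<longrightarrow> m \<in> GM k \<longrightarrow> lM a m \<in> GM (i + k)) \<and>
     (\<forall>k n m b. m \<in> GM k \<longrightarrow> b \<in> GA n \<longrightarrow> rM m b \<in> GM (k + n))"

definition graded_submod ::
  "('r::comm_ring_1 \<Rightarrow> 'a::ring_1) \<Rightarrow> ('a \<Rightarrow> 'm::ab_group_add \<Rightarrow> 'm) \<Rightarrow> (nat \<Rightarrow> 'm set)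
     \<Rightarrow> (nat \<Rightarrow> 'm set) \<Rightarrow> bool" where
  "graded_submod alg lM GM X \<longleftrightarrow>
     (\<forall>n. X n \<subseteq> GM n \<and> 0 \<in> X n \<and> (\<forall>x\<in>X n. \<forall>y\<in>X n. x + y \<in> X n) \<and>
          (\<forall>r. \<forall>x\<in>X n. lM (alg r) x \<in> X n))"

text \<open>hsums X S = \<Oplus>_{j \<in> S} X j (inside M); X_{<m} = hsums X {..<m}.\<close>
definition hsums :: "(nat \<Rightarrow> 'm::ab_group_add set) \<Rightarrow> nat set \<Rightarrow> 'm set" where
  "hsums X S = {sum_list xs | xs. set xs \<subseteq> (\<Union>n\<in>S. X n)}"

definition delta :: "'b \<Rightarrow> 'b \<Rightarrow> int" where
  "delta u = (\<lambda>v. if v = u then 1 else 0)"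

text \<open>The subgroup of the free abelian group Z[S \<times> T] generated by the defining relations
  of S \<otimes>_R T (S a right R-module via s1, T a left R-module via s2).\<close>
inductive_set tensor_rels ::
  "'s::plus set \<Rightarrow> 't::plus set \<Rightarrow> ('r \<Rightarrow> 's \<Rightarrow> 's) \<Rightarrow> ('r \<Rightarrow> 't \<Rightarrow> 't) \<Rightarrow> ('s \<times> 't \<Rightarrow> int) set"
  for S T s1 s2 where
  zero: "(\<lambda>v. 0) \<in> tensor_rels S T s1 s2"
| add_left: "a \<in> S \<Longrightarrow> a' \<in> S \<Longrightarrow> x \<in> T \<Longrightarrow>
     (\<lambda>v. delta (a + a', x) v - delta (a, x) v - delta (a', x) v) \<in> tensor_rels S T s1 s2"
| add_right: "a \<in> S \<Longrightarrow> x \<in> T \<Longrightarrow> x' \<in> T \<Longrightarrow>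
     (\<lambda>v. delta (a, x + x') v - delta (a, x) v - delta (a, x') v) \<in> tensor_rels S T s1 s2"
| balanced: "a \<in> S \<Longrightarrow> x \<in> T \<Longrightarrow>
     (\<lambda>v. delta (s1 r a, x) v - delta (a, s2 r x) v) \<in> tensor_rels S T s1 s2"
| diff: "p \<in> tensor_rels S T s1 s2 \<Longrightarrow> q \<in> tensor_rels S T s1 s2 \<Longrightarrow>
     (\<lambda>v. p v - q v) \<in> tensor_rels S T s1 s2"

text \<open>A list of pairs represents the element \<Sum> a_i \<otimes> x_i; it is zero in S \<otimes>_R T iff
  its formal sum lies in the relation subgroup.\<close>
definition tensor_zero ::
  "'s::plus set \<Rightarrow> 't::plus set \<Rightarrow> ('r \<Rightarrow> 's \<Rightarrow> 's) \<Rightarrow> ('r \<Rightarrow> 't \<Rightarrow> 't) \<Rightarrow> ('s \<times> 't) list \<Rightarrow> bool" where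
  "tensor_zero S T s1 s2 p \<longleftrightarrow> (\<lambda>v. int (count_list p v)) \<in> tensor_rels S T s1 s2"

text \<open>The map S \<otimes>_R T \<rightarrow> M, s \<otimes> t \<mapsto> \<mu> s t, is a bijection (surjective, trivial kernel).\<close>
definition tensor_mult_bij ::
  "'s::plus set \<Rightarrow> 't::plus set \<Rightarrow> ('r \<Rightarrow> 's \<Rightarrow> 's) \<Rightarrow> ('r \<Rightarrow> 't \<Rightarrow> 't)
     \<Rightarrow> ('s \<Rightarrow> 't \<Rightarrow> 'm::monoid_add) \<Rightarrow> bool" where
  "tensor_mult_bij S T s1 s2 \<mu> \<longleftrightarrow>
     (\<forall>v. \<exists>p. set p \<subseteq> S \<times> T \<and> v = sum_list (map (\<lambda>(s, t). \<mu> s t) p)) \<and>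
     (\<forall>p. set p \<subseteq> S \<times> T \<longrightarrow> sum_list (map (\<lambda>(s, t). \<mu> s t) p) = 0 \<longrightarrow> tensor_zero S T s1 s2 p)"

text \<open>Image in M of A \<otimes> X_S under a \<otimes> x \<mapsto> a \<cdot> x.\<close>
definition left_span :: "('a \<Rightarrow> 'm::ab_group_add \<Rightarrow> 'm) \<Rightarrow> (nat \<Rightarrow> 'm set) \<Rightarrow> nat set \<Rightarrow> 'm set" where
  "left_span lM X S = {sum_list (map (\<lambda>(a, x). lM a x) p) | p. set p \<subseteq> UNIV \<times> hsums X S}"

definition koszul_sign :: "nat \<Rightarrow> 'm::ab_group_add \<Rightarrow> 'm" where
  "koszul_sign k v = (if even k then v else - v)"

end

theory Submission
  imports Defs "HOL.Modules"
begin

text \<open>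
  For a generator y of degree m let \<theta>_m b be b with its component of degree n multiplied by
  (-1)^(mn). The hypothesis says that y b = \<theta>_m(b) y modulo A \<otimes> X_{<m}.

  Generation: \<theta>_m is an involution, so a y is y \<theta>_m(a) plus an element of A \<otimes> X_{<m},
  which by induction on m is a right combination of generators.

  Freeness: let \<Sum> y_i b_i = 0 with all y_i of degree at most m. The terms of degree m give
  \<Sum> \<theta>_m(b_i) y_i \<in> A \<otimes> X_{<m}, so by left freeness \<Sum> \<theta>_m(b_i) \<otimes> y_i + w = 0 in A \<otimes> X
  for some w \<in> A \<otimes> X_{<m}. The well defined map A \<otimes> X \<rightarrow> X \<otimes> A, a \<otimes> x \<mapsto> x_m \<otimes> \<theta>_m(a)
  (x_m the component of degree m) kills w and sends this relation to the degree m terms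
  \<Sum> y_i \<otimes> b_i, which therefore vanish in X \<otimes> A. What remains is a relation of lower degree.
\<close>

section \<open>Formal integer combinations and tensor relations\<close>

lemma finite_support_delta: "finite {v. delta u v \<noteq> 0}"
  by (rule finite_subset[of _ "{u}"]) (auto simp: delta_def)

lemma finite_support_delta_diff: "finite {v. delta u v - delta u' v \<noteq> 0}"
  by (rule finite_subset[of _ "{u, u'}"]) (auto simp: delta_def)

lemma finite_support_delta_diff3: "finite {v. delta u v - delta u' v - delta u'' v \<noteq> 0}"
  by (rule finite_subset[of _ "{u, u', u''}"]) (auto simp: delta_def)

lemma tensor_rels_finite_support:
  assumes "h \<in> tensor_rels S T s1 s2"
  shows "finite {v. h v \<noteq> 0}"
  using assms
proof induction
  case (diff p q)
  have "{v. p v - q v \<noteq> 0} \<subseteq> {v. p v \<noteq> 0} \<union> {v. q v \<noteq> 0}" by auto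
  with diff show ?case by (auto intro: finite_subset)
qed (rule finite_support_delta_diff finite_support_delta_diff3 | simp)+

lemma tensor_rels_uminus:
  "p \<in> tensor_rels S T s1 s2 \<Longrightarrow> (\<lambda>v. - p v) \<in> tensor_rels S T s1 s2"
  using tensor_rels.diff[OF tensor_rels.zero] by fastforce

lemma tensor_rels_add:
  "p \<in> tensor_rels S T s1 s2 \<Longrightarrow> q \<in> tensor_rels S T s1 s2 \<Longrightarrow>
    (\<lambda>v. p v + q v) \<in> tensor_rels S T s1 s2"
  using tensor_rels.diff[OF _ tensor_rels_uminus] by fastforce

lemma tensor_rels_delta_zero_left:
  fixes S :: "'s::monoid_add set"
  assumes "0 \<in> S" "x \<in> T"
  shows "delta (0, x) \<in> tensor_rels S T s1 s2"
proof -
  have "(\<lambda>v. delta (0 + 0, x) v - delta (0, x) v - delta (0, x) v) \<in> tensor_rels S T s1 s2"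
    using assms by (intro tensor_rels.add_left)
  from tensor_rels_uminus[OF this] show ?thesis by (simp add: fun_eq_iff)
qed

definition pushforward :: "('u \<Rightarrow> 'w) \<Rightarrow> ('u \<Rightarrow> int) \<Rightarrow> 'w \<Rightarrow> int" where
  "pushforward F h w = sum h {u. h u \<noteq> 0 \<and> F u = w}"

lemma pushforward_eq_sum:
  assumes "finite D" "{u. h u \<noteq> 0} \<subseteq> D"
  shows "pushforward F h w = sum h {u\<in>D. F u = w}"
  unfolding pushforward_def by (rule sum.mono_neutral_left) (use assms in auto)

lemma pushforward_add:
  assumes "finite {u. p u \<noteq> 0}" "finite {u. q u \<noteq> 0}"
  shows "pushforward F (\<lambda>v. p v + q v) = (\<lambda>w. pushforward F p w + pushforward F q w)"
proof
  fix w
  let ?D = "{u. p u \<noteq> 0} \<union> {u. q u \<noteq> 0}"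
  have "pushforward F (\<lambda>v. p v + q v) w = (\<Sum>u | u \<in> ?D \<and> F u = w. p u + q u)"
    by (rule pushforward_eq_sum) (use assms in auto)
  then show "pushforward F (\<lambda>v. p v + q v) w = pushforward F p w + pushforward F q w"
    using assms by (simp add: sum.distrib pushforward_eq_sum[of ?D])
qed

lemma pushforward_diff:
  assumes "finite {u. p u \<noteq> 0}" "finite {u. q u \<noteq> 0}"
  shows "pushforward F (\<lambda>v. p v - q v) = (\<lambda>w. pushforward F p w - pushforward F q w)"
proof
  fix w
  let ?D = "{u. p u \<noteq> 0} \<union> {u. q u \<noteq> 0}"
  have "pushforward F (\<lambda>v. p v - q v) w = (\<Sum>u | u \<in> ?D \<and> F u = w. p u - q u)"
    by (rule pushforward_eq_sum) (use assms in auto)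
  then show "pushforward F (\<lambda>v. p v - q v) w = pushforward F p w - pushforward F q w"
    using assms by (simp add: sum_subtractf pushforward_eq_sum[of ?D])
qed

lemma pushforward_delta: "pushforward F (delta u) = delta (F u)"
proof
  fix w
  have "pushforward F (delta u) w = sum (delta u) {v\<in>{u}. F v = w}"
    by (rule pushforward_eq_sum) (auto simp: delta_def)
  moreover have "{v\<in>{u}. F v = w} = (if F u = w then {u} else {})" by auto
  ultimately show "pushforward F (delta u) w = delta (F u) w"
    by (simp add: delta_def)
qed

lemma pushforward_delta_diff:
  "pushforward F (\<lambda>v. delta u v - delta u' v) = (\<lambda>v. delta (F u) v - delta (F u') v)"
  by (simp add: pushforward_diff finite_support_delta pushforward_delta)

lemma pushforward_delta_diff3:
  "pushforward F (\<lambda>v. delta u v - delta u' v - delta u'' v) =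
     (\<lambda>v. delta (F u) v - delta (F u') v - delta (F u'') v)"
  by (simp add: pushforward_diff[OF finite_support_delta_diff finite_support_delta]
      pushforward_delta pushforward_delta_diff)

lemma pushforward_tensor_rels:
  assumes "h \<in> tensor_rels S T s1 s2"
    and "\<And>a a' x. a \<in> S \<Longrightarrow> a' \<in> S \<Longrightarrow> x \<in> T \<Longrightarrow>
      (\<lambda>v. delta (F (a + a', x)) v - delta (F (a, x)) v - delta (F (a', x)) v) \<in> tensor_rels S' T' s1' s2'"
    and "\<And>a x x'. a \<in> S \<Longrightarrow> x \<in> T \<Longrightarrow> x' \<in> T \<Longrightarrow>
      (\<lambda>v. delta (F (a, x + x')) v - delta (F (a, x)) v - delta (F (a, x')) v) \<in> tensor_rels S' T' s1' s2'"
    and "\<And>a x r. a \<in> S \<Longrightarrow> x \<in> T \<Longrightarrow>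
      (\<lambda>v. delta (F (s1 r a, x)) v - delta (F (a, s2 r x)) v) \<in> tensor_rels S' T' s1' s2'"
  shows "pushforward F h \<in> tensor_rels S' T' s1' s2'"
  using assms(1)
proof induction
  case zero
  have "pushforward F (\<lambda>v. 0) = (\<lambda>v. 0)" by (auto simp: pushforward_def)
  then show ?case by (simp add: tensor_rels.zero)
next
  case (diff p q)
  then show ?case
    by (simp add: pushforward_diff tensor_rels_finite_support tensor_rels.diff)
qed (simp_all add: pushforward_delta_diff3 pushforward_delta_diff assms(2-4))

definition int_times :: "int \<Rightarrow> 'm::ab_group_add \<Rightarrow> 'm" where
  "int_times k x = sum_list (replicate (nat k) x) - sum_list (replicate (nat (- k)) x)"

lemma int_times_add: "int_times (k + l) x = int_times k x + int_times l x"
proof -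
  define s where "s n = sum_list (replicate n x)" for n
  have s_add: "s (i + j) = s i + s j" for i j by (simp add: s_def replicate_add)
  have "nat (k + l) + nat (- k) + nat (- l) = nat k + nat l + nat (- (k + l))" by simp
  then have "s (nat (k + l)) + s (nat (- k)) + s (nat (- l)) = s (nat k) + s (nat l) + s (nat (- (k + l)))"
    by (metis s_add)
  then show ?thesis unfolding int_times_def s_def[symmetric] by (simp add: algebra_simps)
qed

lemma int_times_diff: "int_times (k - l) x = int_times k x - int_times l x"
  using int_times_add[of "k - l" l x] by (simp add: algebra_simps)

lemma int_times_simps [simp]: "int_times 0 x = 0" "int_times 1 x = x"
  by (simp_all add: int_times_def)

definition formal_sum :: "('u \<Rightarrow> 'm::ab_group_add) \<Rightarrow> ('u \<Rightarrow> int) \<Rightarrow> 'm" where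
  "formal_sum \<mu> h = (\<Sum>u | h u \<noteq> 0. int_times (h u) (\<mu> u))"

lemma formal_sum_eq_sum:
  assumes "finite D" "{u. h u \<noteq> 0} \<subseteq> D"
  shows "formal_sum \<mu> h = (\<Sum>u\<in>D. int_times (h u) (\<mu> u))"
  unfolding formal_sum_def by (rule sum.mono_neutral_left) (use assms in auto)

lemma formal_sum_add:
  assumes "finite {u. p u \<noteq> 0}" "finite {u. q u \<noteq> 0}"
  shows "formal_sum \<mu> (\<lambda>v. p v + q v) = formal_sum \<mu> p + formal_sum \<mu> q"
proof -
  let ?D = "{u. p u \<noteq> 0} \<union> {u. q u \<noteq> 0}"
  have "formal_sum \<mu> (\<lambda>v. p v + q v) = (\<Sum>u\<in>?D. int_times (p u + q u) (\<mu> u))"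
    by (rule formal_sum_eq_sum) (use assms in auto)
  then show ?thesis
    using assms by (simp add: int_times_add sum.distrib formal_sum_eq_sum[of ?D])
qed

lemma formal_sum_diff:
  assumes "finite {u. p u \<noteq> 0}" "finite {u. q u \<noteq> 0}"
  shows "formal_sum \<mu> (\<lambda>v. p v - q v) = formal_sum \<mu> p - formal_sum \<mu> q"
proof -
  let ?D = "{u. p u \<noteq> 0} \<union> {u. q u \<noteq> 0}"
  have "formal_sum \<mu> (\<lambda>v. p v - q v) = (\<Sum>u\<in>?D. int_times (p u - q u) (\<mu> u))"
    by (rule formal_sum_eq_sum) (use assms in auto)
  then show ?thesis
    using assms by (simp add: int_times_diff sum_subtractf formal_sum_eq_sum[of ?D])
qed

lemma formal_sum_delta: "formal_sum \<mu> (delta u) = \<mu> u"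
proof -
  have "formal_sum \<mu> (delta u) = (\<Sum>v\<in>{u}. int_times (delta u v) (\<mu> v))"
    by (rule formal_sum_eq_sum) (auto simp: delta_def)
  then show ?thesis by (simp add: delta_def)
qed

lemma formal_sum_delta_diff: "formal_sum \<mu> (\<lambda>v. delta u v - delta u' v) = \<mu> u - \<mu> u'"
  by (simp add: formal_sum_diff finite_support_delta formal_sum_delta)

lemma formal_sum_delta_diff3:
  "formal_sum \<mu> (\<lambda>v. delta u v - delta u' v - delta u'' v) = \<mu> u - \<mu> u' - \<mu> u''"
  by (simp add: formal_sum_diff[OF finite_support_delta_diff finite_support_delta]
      formal_sum_delta formal_sum_delta_diff)

lemma formal_sum_tensor_rels:
  assumes "h \<in> tensor_rels S T s1 s2"
    and "\<And>a a' x. a \<in> S \<Longrightarrow> a' \<in> S \<Longrightarrow> x \<in> T \<Longrightarrow> \<mu> (a + a', x) = \<mu> (a, x) + \<mu> (a', x)"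
    and "\<And>a x x'. a \<in> S \<Longrightarrow> x \<in> T \<Longrightarrow> x' \<in> T \<Longrightarrow> \<mu> (a, x + x') = \<mu> (a, x) + \<mu> (a, x')"
    and "\<And>a x r. a \<in> S \<Longrightarrow> x \<in> T \<Longrightarrow> \<mu> (s1 r a, x) = \<mu> (a, s2 r x)"
  shows "formal_sum \<mu> h = 0"
  using assms(1)
proof induction
  case zero
  show ?case by (simp add: formal_sum_def)
next
  case (diff p q)
  then show ?case by (simp add: formal_sum_diff tensor_rels_finite_support)
qed (simp_all add: formal_sum_delta_diff3 formal_sum_delta_diff assms(2-4))

definition count_vec :: "'u list \<Rightarrow> 'u \<Rightarrow> int" where
  "count_vec p v = int (count_list p v)"

lemma tensor_zero_iff_count_vec:
  "tensor_zero S T s1 s2 p \<longleftrightarrow> count_vec p \<in> tensor_rels S T s1 s2"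
  by (simp add: tensor_zero_def count_vec_def[abs_def])

lemma count_vec_Nil: "count_vec [] = (\<lambda>v. 0)"
  by (simp add: count_vec_def[abs_def])

lemma count_vec_Cons: "count_vec (x # p) = (\<lambda>v. delta x v + count_vec p v)"
  by (auto simp: count_vec_def delta_def)

lemma count_vec_append: "count_vec (p @ q) = (\<lambda>v. count_vec p v + count_vec q v)"
  by (simp add: count_vec_def[abs_def])

lemma count_vec_filter:
  "count_vec p = (\<lambda>v. count_vec (filter P p) v + count_vec (filter (\<lambda>x. \<not> P x) p) v)"
  by (induction p) (auto simp: count_vec_def fun_eq_iff)

lemma finite_support_count_vec: "finite {v. count_vec p v \<noteq> 0}"
  by (rule finite_subset[of _ "set p"]) (auto simp: count_vec_def count_list_0_iff)

lemma formal_sum_count_vec: "formal_sum \<mu> (count_vec p) = sum_list (map \<mu> p)"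
proof (induction p)
  case Nil
  then show ?case by (simp add: count_vec_Nil formal_sum_def)
next
  case (Cons x p)
  then show ?case
    by (simp add: count_vec_Cons formal_sum_add[OF finite_support_delta finite_support_count_vec]
        formal_sum_delta)
qed

lemma pushforward_count_vec: "pushforward F (count_vec p) = count_vec (map F p)"
proof (induction p)
  case Nil
  then show ?case by (simp add: count_vec_Nil pushforward_def)
next
  case (Cons x p)
  then show ?case
    by (simp add: count_vec_Cons pushforward_add[OF finite_support_delta finite_support_count_vec]
        pushforward_delta)
qed

lemma tensor_rels_count_vec_zero_left:
  fixes S :: "'s::monoid_add set"
  assumes "0 \<in> S" "\<And>e. e \<in> set p \<Longrightarrow> fst e = 0 \<and> snd e \<in> T"
  shows "count_vec p \<in> tensor_rels S T s1 s2"
  using assms(2)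
proof (induction p)
  case Nil
  then show ?case by (simp add: count_vec_Nil tensor_rels.zero)
next
  case (Cons e p)
  have "delta e \<in> tensor_rels S T s1 s2"
    using tensor_rels_delta_zero_left[OF assms(1)] Cons.prems[of e] by (cases e) auto
  with Cons show ?case by (simp add: count_vec_Cons tensor_rels_add)
qed

lemma tensor_rels_sum_list_left:
  fixes S :: "'s::monoid_add set"
  assumes "0 \<in> S" "\<And>a a'. a \<in> S \<Longrightarrow> a' \<in> S \<Longrightarrow> a + a' \<in> S" "set xs \<subseteq> S" "x \<in> T"
  shows "(\<lambda>v. delta (sum_list xs, x) v - count_vec (map (\<lambda>a. (a, x)) xs) v) \<in> tensor_rels S T s1 s2"
  using assms(3)
proof (induction xs)
  case Nil
  then show ?case using tensor_rels_delta_zero_left[OF assms(1,4)] by (simp add: count_vec_Nil)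
next
  case (Cons a xs)
  have xs: "set xs \<subseteq> S" using Cons.prems by simp
  then have "sum_list xs \<in> S"
    by (induction xs) (auto intro: assms(1,2))
  then have "(\<lambda>v. delta (a + sum_list xs, x) v - delta (a, x) v - delta (sum_list xs, x) v)
      \<in> tensor_rels S T s1 s2"
    using Cons.prems assms(4) by (intro tensor_rels.add_left) auto
  from tensor_rels_add[OF this Cons.IH[OF xs]] show ?case
    by (simp add: count_vec_Cons algebra_simps)
qed

section \<open>Finite sums of generators\<close>

lemma bounded_index_of_list:
  assumes "\<And>e. e \<in> set q \<Longrightarrow> \<exists>j::nat. P e j"
  shows "\<exists>m. \<forall>e\<in>set q. \<exists>j<m. P e j"
proof -
  obtain f where f: "\<forall>e\<in>set q. P e (f e)" using assms by metis
  have "\<forall>e\<in>set q. f e < Suc (Max (f ` set q))" by (simp add: le_imp_less_Suc)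
  with f show ?thesis by blast
qed

lemma sum_list_map_partition:
  fixes f :: "'u \<Rightarrow> 'm::ab_group_add"
  shows "sum_list (map f xs) = sum_list (map f (filter P xs)) + sum_list (map f (filter (\<lambda>x. \<not> P x) xs))"
  by (induction xs) (auto simp: algebra_simps)

lemma sum_list_map_closed:
  assumes "0 \<in> C" "\<And>u v. u \<in> C \<Longrightarrow> v \<in> C \<Longrightarrow> u + v \<in> C" "\<And>x. x \<in> set xs \<Longrightarrow> f x \<in> C"
  shows "sum_list (map f xs) \<in> C"
  using assms(3) by (induction xs) (auto intro: assms(1,2))

lemma sum_closed:
  assumes "0 \<in> C" "\<And>u v. u \<in> C \<Longrightarrow> v \<in> C \<Longrightarrow> u + v \<in> C" "\<And>x. x \<in> A \<Longrightarrow> f x \<in> C"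
  shows "sum f A \<in> C"
  using assms(3) by (induction A rule: infinite_finite_induct) (auto intro: assms(1,2))

lemma (in additive) sum_list: "f (sum_list xs) = sum_list (map f xs)"
  by (induction xs) (simp_all add: zero add)

definition finite_sums :: "('u \<Rightarrow> 'm::monoid_add) \<Rightarrow> 'u set \<Rightarrow> 'm set" where
  "finite_sums f P = {sum_list (map f p) | p. set p \<subseteq> P}"

lemma finite_sumsE:
  assumes "u \<in> finite_sums f P"
  obtains p where "set p \<subseteq> P" "u = sum_list (map f p)"
  using assms unfolding finite_sums_def by auto

lemma finite_sums_zero: "0 \<in> finite_sums f P"
  unfolding finite_sums_def by (auto intro: exI[of _ "[]"])

lemma finite_sums_add:
  assumes "u \<in> finite_sums f P" "v \<in> finite_sums f P"
  shows "u + v \<in> finite_sums f P"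
proof -
  obtain p q where "set p \<subseteq> P" "u = sum_list (map f p)" "set q \<subseteq> P" "v = sum_list (map f q)"
    using assms by (elim finite_sumsE)
  then show ?thesis unfolding finite_sums_def by (auto intro!: exI[of _ "p @ q"])
qed

lemma finite_sums_generator: "u \<in> P \<Longrightarrow> f u \<in> finite_sums f P"
  unfolding finite_sums_def by (auto intro!: exI[of _ "[u]"])

lemma finite_sums_mono: "P \<subseteq> Q \<Longrightarrow> finite_sums f P \<subseteq> finite_sums f Q"
  unfolding finite_sums_def by blast

lemma sum_list_map_in_finite_sums:
  "(\<And>x. x \<in> set xs \<Longrightarrow> g x \<in> finite_sums f P) \<Longrightarrow> sum_list (map g xs) \<in> finite_sums f P"
  by (rule sum_list_map_closed[OF finite_sums_zero finite_sums_add])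

lemma finite_sums_uminus:
  fixes f :: "'u \<Rightarrow> 'm::ab_group_add"
  assumes "\<And>u. u \<in> P \<Longrightarrow> \<exists>u'\<in>P. f u' = - f u" and "v \<in> finite_sums f P"
  shows "- v \<in> finite_sums f P"
proof -
  obtain p where p: "set p \<subseteq> P" "v = sum_list (map f p)"
    using assms(2) by (rule finite_sumsE)
  have "- v = sum_list (map (\<lambda>u. - f u) p)"
    by (simp add: p(2) uminus_sum_list_map o_def)
  also have "\<dots> \<in> finite_sums f P"
    using p(1) assms(1) by (intro sum_list_map_in_finite_sums) (metis finite_sums_generator subsetD)
  finally show ?thesis .
qed

lemma hsums_eq_finite_sums: "hsums X S = finite_sums id (\<Union>n\<in>S. X n)"
  by (simp add: hsums_def finite_sums_def)

lemma left_span_eq_finite_sums: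
  "left_span lM X S = finite_sums (\<lambda>(a, x). lM a x) (UNIV \<times> hsums X S)"
  by (simp add: left_span_def finite_sums_def)

lemma hsums_zero: "0 \<in> hsums X S"
  and hsums_add: "u \<in> hsums X S \<Longrightarrow> v \<in> hsums X S \<Longrightarrow> u + v \<in> hsums X S"
  unfolding hsums_eq_finite_sums by (simp_all add: finite_sums_zero finite_sums_add)

lemma hsums_generator: "j \<in> S \<Longrightarrow> x \<in> X j \<Longrightarrow> x \<in> hsums X S"
  using finite_sums_generator[of x _ id] by (auto simp: hsums_eq_finite_sums)

lemma hsums_mono: "S \<subseteq> S' \<Longrightarrow> hsums X S \<subseteq> hsums X S'"
  unfolding hsums_eq_finite_sums by (rule finite_sums_mono) blast

lemma (in additive) hsums_image:
  assumes "0 \<in> C" "\<And>u v. u \<in> C \<Longrightarrow> v \<in> C \<Longrightarrow> u + v \<in> C" "v \<in> hsums X S"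
    and "\<And>j x. j \<in> S \<Longrightarrow> x \<in> X j \<Longrightarrow> f x \<in> C"
  shows "f v \<in> C"
proof -
  obtain xs where "set xs \<subseteq> (\<Union>n\<in>S. X n)" "v = sum_list xs"
    using assms(3) unfolding hsums_eq_finite_sums by (auto elim: finite_sumsE)
  then show ?thesis
    using assms(4) by (auto simp: sum_list intro!: sum_list_map_closed[OF assms(1,2)])
qed

section \<open>Homogeneous components\<close>

definition hcomp :: "(nat \<Rightarrow> 'a::ab_group_add set) \<Rightarrow> 'a \<Rightarrow> nat \<Rightarrow> 'a" where
  "hcomp G v = (THE f. (\<forall>n. f n \<in> G n) \<and> finite {n. f n \<noteq> 0} \<and> v = sum f {n. f n \<noteq> 0})"

lemma graded_dsum_closed:
  assumes "graded_dsum G"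
  shows "0 \<in> G n" "x \<in> G n \<Longrightarrow> y \<in> G n \<Longrightarrow> x + y \<in> G n" "x \<in> G n \<Longrightarrow> - x \<in> G n"
  using assms by (auto simp: graded_dsum_def)

lemma hcomp_spec:
  assumes "graded_dsum G"
  shows "(\<forall>n. hcomp G v n \<in> G n) \<and> finite {n. hcomp G v n \<noteq> 0} \<and> v = sum (hcomp G v) {n. hcomp G v n \<noteq> 0}"
proof -
  have "\<exists>!f. (\<forall>n. f n \<in> G n) \<and> finite {n. f n \<noteq> 0} \<and> v = sum f {n. f n \<noteq> 0}"
    using assms by (simp add: graded_dsum_def)
  then show ?thesis unfolding hcomp_def by (rule theI')
qed

lemma hcomp_in: "graded_dsum G \<Longrightarrow> hcomp G v n \<in> G n"
  using hcomp_spec by blast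

lemma finite_hcomp_support: "graded_dsum G \<Longrightarrow> finite {n. hcomp G v n \<noteq> 0}"
  using hcomp_spec by blast

lemma sum_hcomp:
  assumes "graded_dsum G" "finite D" "{n. hcomp G v n \<noteq> 0} \<subseteq> D"
  shows "sum (hcomp G v) D = v"
proof -
  have "sum (hcomp G v) D = sum (hcomp G v) {n. hcomp G v n \<noteq> 0}"
    by (rule sum.mono_neutral_right) (use assms in auto)
  then show ?thesis using hcomp_spec[OF assms(1)] by metis
qed

lemma hcomp_unique:
  assumes G: "graded_dsum G" and "\<And>n. g n \<in> G n" "finite D" "{n. g n \<noteq> 0} \<subseteq> D" "v = sum g D"
  shows "hcomp G v = g"
proof -
  have "sum g D = sum g {n. g n \<noteq> 0}"
    by (rule sum.mono_neutral_right) (use assms in auto)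
  moreover have "finite {n. g n \<noteq> 0}" using assms(3,4) by (rule finite_subset[rotated])
  ultimately have "(\<forall>n. g n \<in> G n) \<and> finite {n. g n \<noteq> 0} \<and> v = sum g {n. g n \<noteq> 0}"
    using assms by auto
  moreover have "\<exists>!f. (\<forall>n. f n \<in> G n) \<and> finite {n. f n \<noteq> 0} \<and> v = sum f {n. f n \<noteq> 0}"
    using G by (simp add: graded_dsum_def)
  ultimately show ?thesis unfolding hcomp_def by (rule the1_equality[rotated])
qed

lemma hcomp_inject: "graded_dsum G \<Longrightarrow> hcomp G v = hcomp G w \<Longrightarrow> v = w"
  by (metis hcomp_spec)

lemma hcomp_homogeneous:
  assumes "graded_dsum G" "v \<in> G k"
  shows "hcomp G v = (\<lambda>n. if n = k then v else 0)"
  by (rule hcomp_unique[where D = "{k}"]) (use assms graded_dsum_closed[OF assms(1)] in auto)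

lemma hcomp_add:
  assumes G: "graded_dsum G"
  shows "hcomp G (v + w) = (\<lambda>n. hcomp G v n + hcomp G w n)"
proof -
  let ?D = "{n. hcomp G v n \<noteq> 0} \<union> {n. hcomp G w n \<noteq> 0}"
  have "finite ?D" using finite_hcomp_support[OF G] by blast
  then have "v + w = (\<Sum>n\<in>?D. hcomp G v n + hcomp G w n)"
    by (simp add: sum.distrib sum_hcomp[OF G])
  with \<open>finite ?D\<close> show ?thesis
    by (intro hcomp_unique[OF G, where D = ?D]) (auto intro: graded_dsum_closed[OF G] hcomp_in[OF G])
qed

lemma additive_hcomp: "graded_dsum G \<Longrightarrow> additive (\<lambda>v. hcomp G v n)"
  by (simp add: additive_def hcomp_add)

lemma hcomp_additive_image:
  fixes f :: "'a::ab_group_add \<Rightarrow> 'a"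
  assumes f: "additive f" and G: "graded_dsum G" and "\<And>n x. x \<in> G n \<Longrightarrow> f x \<in> G n"
  shows "hcomp G (f v) = (\<lambda>n. f (hcomp G v n))"
proof (rule hcomp_unique[OF G, where D = "{n. hcomp G v n \<noteq> 0}"])
  have "f v = f (sum (hcomp G v) {n. hcomp G v n \<noteq> 0})"
    using hcomp_spec[OF G] by metis
  then show "f v = (\<Sum>n | hcomp G v n \<noteq> 0. f (hcomp G v n))"
    by (simp add: additive.sum[OF f])
qed (use assms finite_hcomp_support[OF G] hcomp_in[OF G] additive.zero[OF f] in auto)

lemma koszul_sign_add: "koszul_sign k (u + v) = koszul_sign k u + koszul_sign k v"
  and koszul_sign_involution: "koszul_sign k (koszul_sign k u) = u"
  and koszul_sign_mult_right: "koszul_sign k (b * c) = koszul_sign k b * (c :: 'a::ring_1)"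
  by (simp_all add: koszul_sign_def)

section \<open>Bimodules with triangular right action\<close>

locale triangular_bimodule =
  fixes alg :: "'r::comm_ring_1 \<Rightarrow> 'a::ring_1"
    and GA :: "nat \<Rightarrow> 'a set"
    and lM :: "'a \<Rightarrow> 'm::ab_group_add \<Rightarrow> 'm"
    and rM :: "'m \<Rightarrow> 'a \<Rightarrow> 'm"
    and GM :: "nat \<Rightarrow> 'm set"
    and X :: "nat \<Rightarrow> 'm set"
  assumes algebra: "graded_R_algebra alg GA"
    and bimodule: "graded_bimodule alg GA lM rM GM"
    and generators: "graded_submod alg lM GM X"
    and left_free: "tensor_mult_bij UNIV (hsums X UNIV) (\<lambda>r a. a * alg r) (\<lambda>r x. lM (alg r) x) lM"
    and right_triangular: "\<forall>m n a x b. x \<in> X m \<longrightarrow> b \<in> GA n \<longrightarrow>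
           rM (lM a x) b - koszul_sign (m * n) (lM (a * b) x) \<in> left_span lM X {..<m}"
begin

lemma additive_lM_left: "additive (\<lambda>a. lM a y)"
  and additive_lM_right: "additive (lM a)"
  and additive_rM_left: "additive (\<lambda>y. rM y b)"
  and additive_rM_right: "additive (rM y)"
  using bimodule by (simp_all add: additive_def graded_bimodule_def)

lemma lM_one: "lM 1 y = y"
  and rM_mult: "rM y (b * b') = rM (rM y b) b'"
  and lM_alg_eq_rM_alg: "lM (alg r) y = rM y (alg r)"
  and GM_dsum: "graded_dsum GM"
  and lM_in_GM: "a \<in> GA i \<Longrightarrow> y \<in> GM k \<Longrightarrow> lM a y \<in> GM (i + k)"
  using bimodule by (simp_all add: graded_bimodule_def)

lemma GA_dsum: "graded_dsum GA"
  and alg_commute: "alg r * a = a * alg r"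
  and alg_mult_in_GA: "a \<in> GA n \<Longrightarrow> alg r * a \<in> GA n"
  and one_in_GA: "1 \<in> GA 0"
  using algebra unfolding graded_R_algebra_def by metis+

lemma alg_in_GA: "alg r \<in> GA 0"
  using alg_mult_in_GA[OF one_in_GA, of r] by simp

lemma X_subset_GM: "X n \<subseteq> GM n"
  and X_zero: "0 \<in> X n"
  and X_add: "x \<in> X n \<Longrightarrow> y \<in> X n \<Longrightarrow> x + y \<in> X n"
  using generators by (simp_all add: graded_submod_def)

text \<open>Inside M, low_span m is A \<otimes> X_{<m} and right_span is X A; left_rels and right_rels
  are the relations presenting A \<otimes> X and X \<otimes> A.\<close>
abbreviation "Xsum \<equiv> hsums X UNIV"
abbreviation "low_span m \<equiv> left_span lM X {..<m}"
abbreviation "right_span \<equiv> finite_sums (\<lambda>(y, b). rM y b) (Xsum \<times> UNIV)"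
abbreviation "left_sum p \<equiv> sum_list (map (\<lambda>(a, x). lM a x) p)"
abbreviation "right_sum p \<equiv> sum_list (map (\<lambda>(y, b). rM y b) p)"
abbreviation "left_rels \<equiv> tensor_rels UNIV Xsum (\<lambda>r a. a * alg r) (\<lambda>r x. lM (alg r) x)"
abbreviation "right_rels \<equiv> tensor_rels Xsum UNIV (\<lambda>r y. lM (alg r) y) (\<lambda>r b. alg r * b)"

lemma generator_in_Xsum: "x \<in> X j \<Longrightarrow> x \<in> Xsum"
  by (rule hsums_generator) simp_all

lemma low_span_zero: "0 \<in> low_span m"
  and low_span_add: "u \<in> low_span m \<Longrightarrow> v \<in> low_span m \<Longrightarrow> u + v \<in> low_span m"
  and low_span_sum_list:
    "(\<And>x. x \<in> set xs \<Longrightarrow> f x \<in> low_span m) \<Longrightarrow> sum_list (map f xs) \<in> low_span m"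
  unfolding left_span_eq_finite_sums
  by (simp_all add: finite_sums_zero finite_sums_add sum_list_map_in_finite_sums)

lemma low_span_generator: "j < m \<Longrightarrow> x \<in> X j \<Longrightarrow> lM a x \<in> low_span m"
  unfolding left_span_eq_finite_sums
  using finite_sums_generator[of "(a, x)" "UNIV \<times> hsums X {..<m}" "\<lambda>(a, x). lM a x"]
    hsums_generator[of j "{..<m}"] by auto

lemma low_span_mono: "j \<le> m \<Longrightarrow> low_span j \<subseteq> low_span m"
  unfolding left_span_eq_finite_sums
  by (intro finite_sums_mono Sigma_mono hsums_mono) auto

lemma low_span_diff:
  assumes "u \<in> low_span m" "v \<in> low_span m"
  shows "u - v \<in> low_span m"
proof -
  have "- v \<in> low_span m"
    using assms(2) unfolding left_span_eq_finite_sums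
    by (rule finite_sums_uminus[rotated])
      (use additive.minus[OF additive_lM_left] in \<open>fastforce intro!: bexI[of _ "(- _, _)"]\<close>)
  with assms(1) show ?thesis using low_span_add by fastforce
qed

lemma right_span_zero: "0 \<in> right_span"
  and right_span_add: "u \<in> right_span \<Longrightarrow> v \<in> right_span \<Longrightarrow> u + v \<in> right_span"
  by (simp_all add: finite_sums_zero finite_sums_add)

lemma right_span_diff:
  assumes "u \<in> right_span" "v \<in> right_span"
  shows "u - v \<in> right_span"
proof -
  have "- v \<in> right_span"
    using assms(2) by (rule finite_sums_uminus[rotated])
      (use additive.minus[OF additive_rM_right] in \<open>fastforce intro!: bexI[of _ "(_, - _)"]\<close>)
  with assms(1) show ?thesis using finite_sums_add by fastforce
qed

lemma low_span_sum: "(\<And>x. x \<in> A \<Longrightarrow> f x \<in> low_span m) \<Longrightarrow> sum f A \<in> low_span m"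
  by (rule sum_closed[OF low_span_zero low_span_add])

lemma lM_koszul_sign: "lM (koszul_sign k a) y = koszul_sign k (lM a y)"
  by (simp add: koszul_sign_def additive.minus[OF additive_lM_left])

text \<open>Moving b past a generator of degree m multiplies its component of degree n by (-1)^(mn).\<close>
definition koszul_twist :: "nat \<Rightarrow> 'a \<Rightarrow> 'a" where
  "koszul_twist m b = (\<Sum>n | hcomp GA b n \<noteq> 0. koszul_sign (m * n) (hcomp GA b n))"

lemma hcomp_koszul_twist:
  "hcomp GA (koszul_twist m b) = (\<lambda>n. koszul_sign (m * n) (hcomp GA b n))"
proof (rule hcomp_unique[OF GA_dsum, where D = "{n. hcomp GA b n \<noteq> 0}"])
  show "koszul_sign (m * n) (hcomp GA b n) \<in> GA n" for n
    using hcomp_in[OF GA_dsum] graded_dsum_closed[OF GA_dsum] by (simp add: koszul_sign_def)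
qed (auto simp: koszul_twist_def koszul_sign_def finite_hcomp_support[OF GA_dsum])

lemma koszul_twist_add: "koszul_twist m (b + b') = koszul_twist m b + koszul_twist m b'"
  by (rule hcomp_inject[OF GA_dsum])
    (simp add: hcomp_add[OF GA_dsum] hcomp_koszul_twist koszul_sign_add)

lemma hcomp_GA_mult_alg: "hcomp GA (b * alg r) = (\<lambda>n. hcomp GA b n * alg r)"
proof -
  have "additive (\<lambda>b. b * alg r)" by (simp add: additive_def distrib_right)
  then show ?thesis
    by (rule hcomp_additive_image[OF _ GA_dsum]) (metis alg_commute alg_mult_in_GA)
qed

lemma koszul_twist_alg: "koszul_twist m (b * alg r) = alg r * koszul_twist m b"
  unfolding alg_commute[of r]
  by (rule hcomp_inject[OF GA_dsum])
    (simp add: hcomp_GA_mult_alg hcomp_koszul_twist koszul_sign_mult_right)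

lemma koszul_twist_involution: "koszul_twist m (koszul_twist m b) = b"
  by (rule hcomp_inject[OF GA_dsum]) (simp add: hcomp_koszul_twist koszul_sign_involution)

lemma rM_generator_mod_low_span:
  assumes y: "y \<in> X m"
  shows "rM y b - lM (koszul_twist m b) y \<in> low_span m"
proof -
  let ?D = "{n. hcomp GA b n \<noteq> 0}"
  have "rM y b = rM y (sum (hcomp GA b) ?D)"
    using sum_hcomp[OF GA_dsum finite_hcomp_support[OF GA_dsum]] by simp
  then have "rM y b - lM (koszul_twist m b) y =
      (\<Sum>n\<in>?D. rM (lM 1 y) (hcomp GA b n) - koszul_sign (m * n) (lM (1 * hcomp GA b n) y))"
    by (simp add: koszul_twist_def additive.sum[OF additive_rM_right] additive.sum[OF additive_lM_left]
        lM_koszul_sign sum_subtractf lM_one)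
  also have "\<dots> \<in> low_span m"
    by (intro low_span_sum right_triangular[rule_format, OF y hcomp_in[OF GA_dsum]])
  finally show ?thesis .
qed

lemma hcomp_GM_generator: "x \<in> X j \<Longrightarrow> hcomp GM x m = (if m = j then x else 0)"
  using hcomp_homogeneous[OF GM_dsum] X_subset_GM by fastforce

lemma hcomp_GM_in_X: "x \<in> Xsum \<Longrightarrow> hcomp GM x m \<in> X m"
  by (rule additive.hsums_image[OF additive_hcomp[OF GM_dsum] X_zero X_add])
    (auto simp: hcomp_GM_generator X_zero)

lemma hcomp_GM_low:
  assumes "z \<in> hsums X {..<m}"
  shows "hcomp GM z m = 0"
proof -
  have "hcomp GM z m \<in> {0}"
    by (rule additive.hsums_image[OF additive_hcomp[OF GM_dsum] _ _ assms])
      (auto simp: hcomp_GM_generator)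
  then show ?thesis by simp
qed

lemma hcomp_GM_alg: "hcomp GM (lM (alg r) x) m = lM (alg r) (hcomp GM x m)"
  using hcomp_additive_image[OF additive_lM_right GM_dsum] lM_in_GM[OF alg_in_GA] by fastforce

lemma low_span_subset_right_span:
  assumes "\<And>j a x. j < m \<Longrightarrow> x \<in> X j \<Longrightarrow> lM a x \<in> right_span"
  shows "low_span m \<subseteq> right_span"
proof
  fix u assume "u \<in> low_span m"
  then obtain p where p: "set p \<subseteq> UNIV \<times> hsums X {..<m}" "u = left_sum p"
    unfolding left_span_eq_finite_sums by (rule finite_sumsE)
  have "lM a y \<in> right_span" if "y \<in> hsums X {..<m}" for a y
    by (rule additive.hsums_image[OF additive_lM_right right_span_zero right_span_add that])
      (auto intro: assms)
  with p show "u \<in> right_span" by (auto intro!: sum_list_map_in_finite_sums split: prod.split)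
qed

lemma lM_generator_in_right_span: "x \<in> X m \<Longrightarrow> lM a x \<in> right_span"
proof (induction m arbitrary: a x rule: less_induct)
  case (less m)
  have "rM x (koszul_twist m a) - lM a x \<in> low_span m"
    using rM_generator_mod_low_span[OF less.prems, of "koszul_twist m a"]
    by (simp add: koszul_twist_involution)
  also have "\<dots> \<subseteq> right_span" by (rule low_span_subset_right_span) (rule less.IH)
  finally have diff: "rM x (koszul_twist m a) - lM a x \<in> right_span" .
  have "rM x (koszul_twist m a) \<in> right_span"
    using finite_sums_generator[of "(x, koszul_twist m a)" "Xsum \<times> UNIV" "\<lambda>(y, b). rM y b"]
      generator_in_Xsum[OF less.prems] by simp
  from right_span_diff[OF this diff] show ?case by simp
qed

lemma right_span_eq_UNIV: "right_span = UNIV"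
proof -
  have "v \<in> right_span" for v
  proof -
    obtain p where p: "set p \<subseteq> UNIV \<times> Xsum" "v = left_sum p"
      using left_free unfolding tensor_mult_bij_def by blast
    have "lM a y \<in> right_span" if "y \<in> Xsum" for a y
      by (rule additive.hsums_image[OF additive_lM_right right_span_zero right_span_add that])
        (auto intro: lM_generator_in_right_span)
    with p show ?thesis by (auto intro!: sum_list_map_in_finite_sums split: prod.split)
  qed
  then show ?thesis by blast
qed

lemma right_sum_eq_zero_of_right_rels:
  assumes "count_vec p \<in> right_rels"
  shows "right_sum p = 0"
proof -
  have "formal_sum (\<lambda>(y, b). rM y b) (count_vec p) = 0"
    using assms by (rule formal_sum_tensor_rels)
      (simp_all add: additive.add[OF additive_rM_left] additive.add[OF additive_rM_right]
        lM_alg_eq_rM_alg rM_mult)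
  then show ?thesis by (simp add: formal_sum_count_vec)
qed

lemma right_rels_homogeneous_reduction:
  assumes "set p \<subseteq> Xsum \<times> UNIV"
  shows "\<exists>q. (\<forall>e\<in>set q. \<exists>j. fst e \<in> X j) \<and> (\<lambda>v. count_vec p v - count_vec q v) \<in> right_rels
    \<and> right_sum p = right_sum q"
  using assms
proof (induction p)
  case Nil
  show ?case by (rule exI[of _ "[]"]) (simp add: count_vec_Nil tensor_rels.zero)
next
  case (Cons e p)
  obtain y b where e: "e = (y, b)" "y \<in> Xsum" using Cons.prems by (cases e) auto
  obtain xs where xs: "set xs \<subseteq> (\<Union>n. X n)" "y = sum_list xs"
    using e(2) unfolding hsums_eq_finite_sums by (auto elim: finite_sumsE)
  obtain q where q: "\<forall>e\<in>set q. \<exists>j. fst e \<in> X j"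
      "(\<lambda>v. count_vec p v - count_vec q v) \<in> right_rels" "right_sum p = right_sum q"
    using Cons by auto
  let ?q' = "map (\<lambda>x. (x, b)) xs"
  have "(\<lambda>v. delta (y, b) v - count_vec ?q' v) \<in> right_rels"
    unfolding xs(2)
    by (rule tensor_rels_sum_list_left)
      (use xs(1) generator_in_Xsum in \<open>auto intro: hsums_zero hsums_add\<close>)
  from tensor_rels_add[OF this q(2)]
  have "(\<lambda>v. count_vec (e # p) v - count_vec (?q' @ q) v) \<in> right_rels"
    by (simp add: e count_vec_Cons count_vec_append algebra_simps)
  moreover have "rM y b = right_sum ?q'"
    by (simp add: xs(2) additive.sum_list[OF additive_rM_left] o_def)
  moreover have "\<forall>e\<in>set (?q' @ q). \<exists>j. fst e \<in> X j"
    using q(1) xs(1) by fastforce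
  ultimately show ?case
    using q(3) e by (intro exI[of _ "?q' @ q"]) auto
qed

lemma right_sum_in_low_span:
  assumes "\<forall>e\<in>set q. \<exists>j<m. fst e \<in> X j"
  shows "right_sum q \<in> low_span m"
proof (rule low_span_sum_list)
  fix e assume "e \<in> set q"
  then obtain j where j: "j < m" "fst e \<in> X j" using assms by blast
  obtain y b where "e = (y, b)" by (cases e)
  with j have e: "e = (y, b)" "j < m" "y \<in> X j" by auto
  have "rM y b - lM (koszul_twist j b) y \<in> low_span m"
    using rM_generator_mod_low_span[OF e(3)] low_span_mono[of j m] e(2) by auto
  moreover have "lM (koszul_twist j b) y \<in> low_span m"
    using e by (intro low_span_generator)
  ultimately have "rM y b - lM (koszul_twist j b) y + lM (koszul_twist j b) y \<in> low_span m"
    by (rule low_span_add)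
  with e(1) show "(case e of (y, b) \<Rightarrow> rM y b) \<in> low_span m" by simp
qed

lemma left_rels_of_left_sum_in_low_span:
  assumes "set p \<subseteq> UNIV \<times> Xsum" "left_sum p \<in> low_span m"
  obtains w where "set w \<subseteq> UNIV \<times> hsums X {..<m}" "count_vec (p @ w) \<in> left_rels"
proof -
  obtain w0 where w0: "set w0 \<subseteq> UNIV \<times> hsums X {..<m}" "left_sum p = left_sum w0"
    using assms(2) unfolding left_span_eq_finite_sums by (rule finite_sumsE)
  define w where "w = map (\<lambda>(a, x). (- a, x)) w0"
  have "left_sum w = - left_sum w0"
    by (simp add: w_def uminus_sum_list_map o_def split_def additive.minus[OF additive_lM_left])
  with w0(2) have "left_sum (p @ w) = 0" by simp
  moreover have "set (p @ w) \<subseteq> UNIV \<times> Xsum"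
    using assms(1) w0(1) hsums_mono[of "{..<m}" UNIV X] by (auto simp: w_def)
  ultimately have "count_vec (p @ w) \<in> left_rels"
    using left_free unfolding tensor_mult_bij_def tensor_zero_iff_count_vec by blast
  moreover have "set w \<subseteq> UNIV \<times> hsums X {..<m}" using w0(1) by (auto simp: w_def)
  ultimately show ?thesis by (rule that[rotated])
qed

definition twisted_swap :: "nat \<Rightarrow> 'a \<times> 'm \<Rightarrow> 'm \<times> 'a" where
  "twisted_swap m = (\<lambda>(a, x). (hcomp GM x m, koszul_twist m a))"

lemma twisted_swap_simp [simp]: "twisted_swap m (a, x) = (hcomp GM x m, koszul_twist m a)"
  by (simp add: twisted_swap_def)

lemma pushforward_twisted_swap:
  assumes "h \<in> left_rels"
  shows "pushforward (twisted_swap m) h \<in> right_rels"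
  using assms
proof (rule pushforward_tensor_rels)
  fix a a' :: 'a and x :: 'm assume "x \<in> Xsum"
  then have "(\<lambda>v. delta (hcomp GM x m, koszul_twist m a + koszul_twist m a') v
      - delta (hcomp GM x m, koszul_twist m a) v - delta (hcomp GM x m, koszul_twist m a') v) \<in> right_rels"
    using hcomp_GM_in_X generator_in_Xsum by (intro tensor_rels.add_right) auto
  then show "(\<lambda>v. delta (twisted_swap m (a + a', x)) v - delta (twisted_swap m (a, x)) v
      - delta (twisted_swap m (a', x)) v) \<in> right_rels"
    by (simp add: koszul_twist_add)
next
  fix a :: 'a and x x' :: 'm assume "x \<in> Xsum" "x' \<in> Xsum"
  then have "(\<lambda>v. delta (hcomp GM x m + hcomp GM x' m, koszul_twist m a) v
      - delta (hcomp GM x m, koszul_twist m a) v - delta (hcomp GM x' m, koszul_twist m a) v) \<in> right_rels"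
    using hcomp_GM_in_X generator_in_Xsum by (intro tensor_rels.add_left) auto
  then show "(\<lambda>v. delta (twisted_swap m (a, x + x')) v - delta (twisted_swap m (a, x)) v
      - delta (twisted_swap m (a, x')) v) \<in> right_rels"
    by (simp add: hcomp_add[OF GM_dsum])
next
  fix a :: 'a and x :: 'm and r assume "x \<in> Xsum"
  then have "(\<lambda>v. delta (lM (alg r) (hcomp GM x m), koszul_twist m a) v
      - delta (hcomp GM x m, alg r * koszul_twist m a) v) \<in> right_rels"
    using hcomp_GM_in_X generator_in_Xsum by (intro tensor_rels.balanced) auto
  from tensor_rels_uminus[OF this]
  show "(\<lambda>v. delta (twisted_swap m (a * alg r, x)) v - delta (twisted_swap m (a, lM (alg r) x)) v)
      \<in> right_rels"
    by (simp add: koszul_twist_alg hcomp_GM_alg)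
qed

lemma right_rels_of_top_degree:
  assumes q: "set q \<subseteq> X m \<times> UNIV" and low: "right_sum q \<in> low_span m"
  shows "count_vec q \<in> right_rels"
proof -
  define p where "p = map (\<lambda>(y, b). (koszul_twist m b, y)) q"
  have "right_sum q - left_sum p = (\<Sum>(y, b)\<leftarrow>q. rM y b - lM (koszul_twist m b) y)"
    by (simp add: p_def sum_list_subtractf o_def split_def)
  also have "\<dots> \<in> low_span m"
    using q rM_generator_mod_low_span by (intro low_span_sum_list) auto
  finally have "right_sum q - (right_sum q - left_sum p) \<in> low_span m"
    by (rule low_span_diff[OF low])
  then have p_low: "left_sum p \<in> low_span m" by simp
  have "set p \<subseteq> UNIV \<times> Xsum"
    using q generator_in_Xsum by (auto simp: p_def)
  then obtain w where w: "set w \<subseteq> UNIV \<times> hsums X {..<m}" "count_vec (p @ w) \<in> left_rels"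
    using p_low by (rule left_rels_of_left_sum_in_low_span)
  have "map (twisted_swap m) p = q"
    using q by (auto simp: p_def koszul_twist_involution hcomp_GM_generator intro!: map_idI)
  then have "count_vec (q @ map (twisted_swap m) w) \<in> right_rels"
    using pushforward_twisted_swap[OF w(2), of m] by (simp add: pushforward_count_vec)
  moreover have "count_vec (map (twisted_swap m) w) \<in> right_rels"
    using w(1) hcomp_GM_low by (intro tensor_rels_count_vec_zero_left hsums_zero) auto
  ultimately show ?thesis
    using tensor_rels.diff by (fastforce simp: count_vec_append)
qed

lemma right_rels_of_bounded_degree:
  "\<forall>e\<in>set q. \<exists>j<m. fst e \<in> X j \<Longrightarrow> right_sum q = 0 \<Longrightarrow> count_vec q \<in> right_rels"
proof (induction m arbitrary: q)
  case 0
  then have "q = []" by (cases q) auto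
  then show ?case by (simp add: count_vec_Nil tensor_rels.zero)
next
  case (Suc m)
  define low where "low e \<longleftrightarrow> (\<exists>j<m. fst e \<in> X j)" for e :: "'m \<times> 'a"
  define top where "top = filter (\<lambda>e. \<not> low e) q"
  define rest where "rest = filter low q"
  have sum_q: "right_sum q = right_sum rest + right_sum top"
    unfolding rest_def top_def by (rule sum_list_map_partition)
  have "right_sum rest \<in> low_span m"
    by (rule right_sum_in_low_span) (simp add: rest_def low_def)
  then have "0 - right_sum rest \<in> low_span m"
    by (intro low_span_diff low_span_zero)
  moreover have "right_sum top = 0 - right_sum rest"
    using Suc.prems(2) sum_q by (simp add: eq_neg_iff_add_eq_0 add.commute)
  ultimately have "right_sum top \<in> low_span m" by simp
  moreover have "set top \<subseteq> X m \<times> UNIV"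
    using Suc.prems(1) by (auto simp: top_def low_def less_Suc_eq)
  ultimately have top: "count_vec top \<in> right_rels"
    by (intro right_rels_of_top_degree)
  then have "right_sum rest = 0"
    using Suc.prems(2) sum_q right_sum_eq_zero_of_right_rels by simp
  then have "count_vec rest \<in> right_rels"
    by (intro Suc.IH) (simp add: rest_def low_def)
  from tensor_rels_add[OF this top] show ?case
    by (simp add: rest_def top_def count_vec_filter[of q low, symmetric])
qed

lemma right_rels_of_right_sum_zero:
  assumes "set p \<subseteq> Xsum \<times> UNIV" "right_sum p = 0"
  shows "count_vec p \<in> right_rels"
proof -
  obtain q where q: "\<forall>e\<in>set q. \<exists>j. fst e \<in> X j"
      "(\<lambda>v. count_vec p v - count_vec q v) \<in> right_rels" "right_sum p = right_sum q"
    using right_rels_homogeneous_reduction[OF assms(1)] by blast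
  obtain m where "\<forall>e\<in>set q. \<exists>j<m. fst e \<in> X j"
    using bounded_index_of_list[of q "\<lambda>e j. fst e \<in> X j"] q(1) by blast
  then have "count_vec q \<in> right_rels"
    using right_rels_of_bounded_degree q(3) assms(2) by simp
  from tensor_rels_add[OF q(2) this] show ?thesis by simp
qed

end

theorem lemma7p11:
  fixes alg :: "'r::comm_ring_1 \<Rightarrow> 'a::ring_1"
    and GA :: "nat \<Rightarrow> 'a set"
    and lM :: "'a \<Rightarrow> 'm::ab_group_add \<Rightarrow> 'm"
    and rM :: "'m \<Rightarrow> 'a \<Rightarrow> 'm"
    and GM :: "nat \<Rightarrow> 'm set"
    and X :: "nat \<Rightarrow> 'm set"
  assumes "graded_R_algebra alg GA"
    and "graded_bimodule alg GA lM rM GM"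
    and "graded_submod alg lM GM X"
    and "tensor_mult_bij UNIV (hsums X UNIV) (\<lambda>r a. a * alg r) (\<lambda>r x. lM (alg r) x) lM"
    and "\<forall>m n a x b. x \<in> X m \<longrightarrow> b \<in> GA n \<longrightarrow>
           rM (lM a x) b - koszul_sign (m * n) (lM (a * b) x) \<in> left_span lM X {..<m}"
  shows "\<exists>Y. graded_submod alg lM GM Y \<and>
           tensor_mult_bij (hsums Y UNIV) UNIV (\<lambda>r y. lM (alg r) y) (\<lambda>r b. alg r * b) rM"
proof -
  interpret triangular_bimodule alg GA lM rM GM X
    using assms by unfold_locales
  have "tensor_mult_bij (hsums X UNIV) UNIV (\<lambda>r y. lM (alg r) y) (\<lambda>r b. alg r * b) rM"
    using right_span_eq_UNIV right_rels_of_right_sum_zero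
    unfolding tensor_mult_bij_def tensor_zero_iff_count_vec finite_sums_def by blast
  with generators show ?thesis by blast
qed

end
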